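(* Let $(x_n)_{n\ge0}$ be an infinite path in $\Gamma$ with $\ell(x_n)=n$. If $\sum_{n=1}^\infty \frac{1}{\lambda_{x_n}}=\infty$, then $J$ with domain $\mathcal F(\Gamma)$ is essentially selfadjoint in $\ell^2(\Gamma)$.
   Context: Let $\Gamma$ be an infinite connected tree whose vertices are arranged in levels $\ell(x)\in\{0,1,2,\dots\}$: every vertex $x$ is adjacent to exactly one vertex $x'$ with $\ell(x')=\ell(x)+1$; for $\ell(x)\ge 1$ the set $N_x=\{y:\ y'=x\}$ of neighbours of $x$ on level $\ell(x)-1$ is finite and nonempty; $N_x=\emptyset$ if $\ell(x)=0$; there are no other edges. Fix $\lambda_x>0$, $\beta_x\in\mathbb R$. The Jacobi matrix $J$ acts on functions $v:\Gamma\to\mathbb C$ by $(Jv)(x)=\lambda_x v(x')+\beta_x v(x)+\sum_{y\in N_x}\lambda_y v(y)$. $\mathcal F(\Gamma)$ denotes the finitely supported functions; $J$ with domain $\mathcal F(\Gamma)$ is symmetric in $\ell^2(\Gamma)$. *)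

theory Defs
  imports "HOL-Analysis.Analysis"
begin

text \<open>The tree is given by a level function lvl and the parent map p (p x is the
unique neighbour x' of x on the next level). The edges are exactly {x, p x}.
N x = {y. p y = x}.\<close>

definition children :: "('v \<Rightarrow> 'v) \<Rightarrow> 'v \<Rightarrow> 'v set" where
  "children p x = {y. p y = x}"

definition level_tree :: "('v \<Rightarrow> nat) \<Rightarrow> ('v \<Rightarrow> 'v) \<Rightarrow> bool" where
  "level_tree lvl p \<longleftrightarrow>
     (\<forall>x. lvl (p x) = Suc (lvl x)) \<and>
     (\<forall>x. finite (children p x)) \<and>
     (\<forall>x. lvl x \<ge> 1 \<longrightarrow> children p x \<noteq> {}) \<and>
     (\<forall>x. lvl x = 0 \<longrightarrow> children p x = {}) \<and>
     (\<forall>x y. \<exists>n m. (p ^^ n) x = (p ^^ m) y)"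

definition l2 :: "('v \<Rightarrow> complex) set" where
  "l2 = {f. (\<lambda>x. (cmod (f x))\<^sup>2) summable_on UNIV}"

definition l2_norm :: "('v \<Rightarrow> complex) \<Rightarrow> real" where
  "l2_norm f = sqrt (\<Sum>\<^sub>\<infinity>x. (cmod (f x))\<^sup>2)"

definition l2_inner :: "('v \<Rightarrow> complex) \<Rightarrow> ('v \<Rightarrow> complex) \<Rightarrow> complex" where
  "l2_inner f g = (\<Sum>\<^sub>\<infinity>x. cnj (f x) * g x)"

definition fin_supp :: "('v \<Rightarrow> complex) set" where
  "fin_supp = {f. finite {x. f x \<noteq> 0}}"

section \<open>Unbounded operators represented by their graphs\<close>

definition op_domain :: "(('v \<Rightarrow> complex) \<times> ('v \<Rightarrow> complex)) set \<Rightarrow> ('v \<Rightarrow> complex) set" where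
  "op_domain G = fst ` G"

definition densely_defined :: "(('v \<Rightarrow> complex) \<times> ('v \<Rightarrow> complex)) set \<Rightarrow> bool" where
  "densely_defined G \<longleftrightarrow> op_domain G \<subseteq> l2 \<and>
     (\<forall>f\<in>l2. \<exists>F. (\<forall>n. F n \<in> op_domain G) \<and> (\<lambda>n. l2_norm (\<lambda>x. F n x - f x)) \<longlonglongrightarrow> 0)"

definition graph_closure :: "(('v \<Rightarrow> complex) \<times> ('v \<Rightarrow> complex)) set \<Rightarrow> (('v \<Rightarrow> complex) \<times> ('v \<Rightarrow> complex)) set" where
  "graph_closure G = {(f, g). f \<in> l2 \<and> g \<in> l2 \<and>
     (\<exists>F H. (\<forall>n. (F n, H n) \<in> G) \<and>
        (\<lambda>n. l2_norm (\<lambda>x. F n x - f x)) \<longlonglongrightarrow> 0 \<and>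
        (\<lambda>n. l2_norm (\<lambda>x. H n x - g x)) \<longlonglongrightarrow> 0)}"

definition adjoint_graph :: "(('v \<Rightarrow> complex) \<times> ('v \<Rightarrow> complex)) set \<Rightarrow> (('v \<Rightarrow> complex) \<times> ('v \<Rightarrow> complex)) set" where
  "adjoint_graph G = {(u, w). u \<in> l2 \<and> w \<in> l2 \<and>
     (\<forall>(f, g)\<in>G. l2_inner g u = l2_inner f w)}"

definition selfadjoint_op :: "(('v \<Rightarrow> complex) \<times> ('v \<Rightarrow> complex)) set \<Rightarrow> bool" where
  "selfadjoint_op G \<longleftrightarrow> densely_defined G \<and> adjoint_graph G = G"

definition essentially_selfadjoint :: "(('v \<Rightarrow> complex) \<times> ('v \<Rightarrow> complex)) set \<Rightarrow> bool" where
  "essentially_selfadjoint G \<longleftrightarrow> selfadjoint_op (graph_closure G)"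

definition jacobi :: "('v \<Rightarrow> 'v) \<Rightarrow> ('v \<Rightarrow> real) \<Rightarrow> ('v \<Rightarrow> real) \<Rightarrow> ('v \<Rightarrow> complex) \<Rightarrow> ('v \<Rightarrow> complex)" where
  "jacobi p lam beta v = (\<lambda>x. complex_of_real (lam x) * v (p x) + complex_of_real (beta x) * v x
      + (\<Sum>y\<in>children p x. complex_of_real (lam y) * v y))"

definition jacobi_graph :: "('v \<Rightarrow> 'v) \<Rightarrow> ('v \<Rightarrow> real) \<Rightarrow> ('v \<Rightarrow> real) \<Rightarrow> (('v \<Rightarrow> complex) \<times> ('v \<Rightarrow> complex)) set" where
  "jacobi_graph p lam beta = {(v, jacobi p lam beta v) | v. v \<in> fin_supp}"

end

theory Submission
  imports Defs
begin

text \<open>Let C be the closure of J on finitely supported functions. C is symmetric, and testing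
  against point masses shows that its adjoint acts by the formal matrix J; so it suffices to put
  every u \<in> l2 with J u \<in> l2 into the domain of C. Measure the spine by the length
  L k = \<Sum>j<k. 1 / \<lambda>(x j) and let \<phi>N be 1 where the path to the root meets the spine at length
  at most N + 1, 0 beyond length 2 (N + 1), and linear in L in between. Since L is unbounded, \<phi>N
  has finite support, and \<phi>N u \<rightarrow> u. The commutator of J with \<phi>N lives on the spine edges,
  where \<lambda> times the jump of \<phi>N is at most 1 / (N + 1); hence J (\<phi>N u) \<rightarrow> J u.\<close>

definition l2_sqnorm :: "('v \<Rightarrow> complex) \<Rightarrow> real" where
  "l2_sqnorm f = (\<Sum>\<^sub>\<infinity>x. (cmod (f x))\<^sup>2)"

lemma l2_norm_eq_sqrt_sqnorm: "l2_norm f = sqrt (l2_sqnorm f)"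
  by (simp add: l2_norm_def l2_sqnorm_def)

lemma l2_sqnorm_nonneg: "l2_sqnorm f \<ge> 0"
  unfolding l2_sqnorm_def by (rule infsum_nonneg) simp

lemma l2_summable: "f \<in> l2 \<Longrightarrow> (\<lambda>x. (cmod (f x))\<^sup>2) summable_on A"
  unfolding l2_def by (auto intro: summable_on_subset)

lemma l2_dominated:
  assumes "g \<in> l2" "\<And>x. cmod (f x) \<le> c * cmod (g x)"
  shows "f \<in> l2" "l2_sqnorm f \<le> c\<^sup>2 * l2_sqnorm g"
proof -
  have le: "(cmod (f x))\<^sup>2 \<le> c\<^sup>2 * (cmod (g x))\<^sup>2" for x
    using power_mono[OF assms(2)[of x] norm_ge_zero] by (simp add: power_mult_distrib)
  have sg: "(\<lambda>x. c\<^sup>2 * (cmod (g x))\<^sup>2) summable_on UNIV"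
    by (intro summable_on_cmult_right l2_summable assms(1))
  have sf: "(\<lambda>x. (cmod (f x))\<^sup>2) summable_on UNIV"
    by (rule summable_on_comparison_test[OF sg]) (use le in auto)
  then show "f \<in> l2" by (simp add: l2_def)
  have "l2_sqnorm f \<le> (\<Sum>\<^sub>\<infinity>x. c\<^sup>2 * (cmod (g x))\<^sup>2)"
    unfolding l2_sqnorm_def by (rule infsum_mono[OF sf sg le])
  then show "l2_sqnorm f \<le> c\<^sup>2 * l2_sqnorm g"
    by (simp add: l2_sqnorm_def infsum_cmult_right')
qed

lemma l2_add:
  assumes "f \<in> l2" "g \<in> l2"
  shows "(\<lambda>x. f x + g x) \<in> l2" "l2_sqnorm (\<lambda>x. f x + g x) \<le> 2 * l2_sqnorm f + 2 * l2_sqnorm g"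
proof -
  have le: "(cmod (f x + g x))\<^sup>2 \<le> 2 * (cmod (f x))\<^sup>2 + 2 * (cmod (g x))\<^sup>2" for x
  proof -
    have "(cmod (f x + g x))\<^sup>2 \<le> (cmod (f x) + cmod (g x))\<^sup>2"
      by (simp add: norm_triangle_ineq power_mono)
    also have "\<dots> \<le> 2 * (cmod (f x))\<^sup>2 + 2 * (cmod (g x))\<^sup>2"
      using sum_squares_ge_zero[of "cmod (f x) - cmod (g x)" 0]
      by (simp add: power2_eq_square algebra_simps)
    finally show ?thesis .
  qed
  have s2: "(\<lambda>x. 2 * (cmod (f x))\<^sup>2 + 2 * (cmod (g x))\<^sup>2) summable_on UNIV"
    by (intro summable_on_add summable_on_cmult_right l2_summable assms)
  have s: "(\<lambda>x. (cmod (f x + g x))\<^sup>2) summable_on UNIV"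
    by (rule summable_on_comparison_test[OF s2]) (use le in auto)
  then show "(\<lambda>x. f x + g x) \<in> l2" by (simp add: l2_def)
  have "l2_sqnorm (\<lambda>x. f x + g x) \<le> (\<Sum>\<^sub>\<infinity>x. 2 * (cmod (f x))\<^sup>2 + 2 * (cmod (g x))\<^sup>2)"
    unfolding l2_sqnorm_def by (rule infsum_mono[OF s s2 le])
  also have "\<dots> = 2 * l2_sqnorm f + 2 * l2_sqnorm g"
    unfolding l2_sqnorm_def
    by (subst infsum_add) (auto intro!: summable_on_cmult_right l2_summable assms
        simp: infsum_cmult_right')
  finally show "l2_sqnorm (\<lambda>x. f x + g x) \<le> 2 * l2_sqnorm f + 2 * l2_sqnorm g" .
qed

lemma l2_diff:
  assumes "f \<in> l2" "g \<in> l2"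
  shows "(\<lambda>x. f x - g x) \<in> l2" "l2_sqnorm (\<lambda>x. f x - g x) \<le> 2 * l2_sqnorm f + 2 * l2_sqnorm g"
proof -
  have "(\<lambda>x. - g x) \<in> l2" "l2_sqnorm (\<lambda>x. - g x) = l2_sqnorm g"
    using assms(2) by (simp_all add: l2_def l2_sqnorm_def)
  then show "(\<lambda>x. f x - g x) \<in> l2" "l2_sqnorm (\<lambda>x. f x - g x) \<le> 2 * l2_sqnorm f + 2 * l2_sqnorm g"
    using l2_add[OF assms(1), of "\<lambda>x. - g x"] by simp_all
qed

lemma fin_supp_l2: "f \<in> fin_supp \<Longrightarrow> f \<in> l2"
  unfolding l2_def fin_supp_def
  by (auto intro!: finite_nonzero_values_imp_summable_on elim!: finite_subset[rotated])

lemma l2_norm_tendsto_0_iff: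
  "(\<lambda>n. l2_norm (F n)) \<longlonglongrightarrow> 0 \<longleftrightarrow> (\<lambda>n. l2_sqnorm (F n)) \<longlonglongrightarrow> 0"
proof
  assume "(\<lambda>n. l2_norm (F n)) \<longlonglongrightarrow> 0"
  then have "(\<lambda>n. (l2_norm (F n))\<^sup>2) \<longlonglongrightarrow> 0\<^sup>2" by (intro tendsto_intros)
  then show "(\<lambda>n. l2_sqnorm (F n)) \<longlonglongrightarrow> 0"
    by (simp add: l2_norm_eq_sqrt_sqnorm l2_sqnorm_nonneg)
next
  assume "(\<lambda>n. l2_sqnorm (F n)) \<longlonglongrightarrow> 0"
  then have "(\<lambda>n. sqrt (l2_sqnorm (F n))) \<longlonglongrightarrow> sqrt 0" by (intro tendsto_intros)
  then show "(\<lambda>n. l2_norm (F n)) \<longlonglongrightarrow> 0" by (simp add: l2_norm_eq_sqrt_sqnorm)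
qed

lemma l2_sqnorm_tendsto_0_squeeze:
  assumes "\<And>n. l2_sqnorm (F n) \<le> b n" "b \<longlonglongrightarrow> 0"
  shows "(\<lambda>n. l2_sqnorm (F n)) \<longlonglongrightarrow> 0"
  by (rule tendsto_sandwich[of "\<lambda>_. 0" _ _ b])
     (use assms l2_sqnorm_nonneg in \<open>auto intro: always_eventually\<close>)

lemma l2_inner_cnj: "l2_inner a b = cnj (l2_inner b a)"
  unfolding l2_inner_def infsum_cnj[symmetric] by (simp add: mult.commute)

lemma l2_inner_abs_summable:
  assumes "a \<in> l2" "b \<in> l2"
  shows "(\<lambda>x. cmod (a x) * cmod (b x)) summable_on UNIV"
proof -
  have le: "cmod (a x) * cmod (b x) \<le> (cmod (a x))\<^sup>2 + (cmod (b x))\<^sup>2" for x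
  proof -
    have "2 * (cmod (a x) * cmod (b x)) \<le> (cmod (a x))\<^sup>2 + (cmod (b x))\<^sup>2"
      using sum_squares_ge_zero[of "cmod (a x) - cmod (b x)" 0]
      by (simp add: power2_eq_square algebra_simps)
    then show ?thesis using mult_nonneg_nonneg[OF norm_ge_zero norm_ge_zero, of "a x" "b x"]
      by linarith
  qed
  have "(\<lambda>x. (cmod (a x))\<^sup>2 + (cmod (b x))\<^sup>2) summable_on UNIV"
    by (intro summable_on_add l2_summable assms)
  then show ?thesis
    by (rule summable_on_comparison_test) (use le in auto)
qed

lemma l2_point_le_sqnorm: "f \<in> l2 \<Longrightarrow> (cmod (f x))\<^sup>2 \<le> l2_sqnorm f"
  unfolding l2_sqnorm_def
  using finite_sum_le_infsum[of "\<lambda>x. (cmod (f x))\<^sup>2" UNIV "{x}"] by (simp add: l2_summable)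

lemma l2_cauchy_schwarz:
  assumes "a \<in> l2" "b \<in> l2"
  shows "cmod (l2_inner a b) \<le> l2_norm a * l2_norm b"
proof -
  define A B where "A = l2_sqnorm a" and "B = l2_sqnorm b"
  have "cmod (l2_inner a b) \<le> (\<Sum>\<^sub>\<infinity>x. cmod (cnj (a x) * b x))"
    unfolding l2_inner_def
    by (rule norm_infsum_bound) (use l2_inner_abs_summable[OF assms] in \<open>simp add: norm_mult\<close>)
  also have "\<dots> \<le> sqrt A * sqrt B"
  proof (cases "A = 0 \<or> B = 0")
    case True
    then have "(\<lambda>x. cmod (cnj (a x) * b x)) = (\<lambda>_. 0)"
      using l2_point_le_sqnorm[OF assms(1)] l2_point_le_sqnorm[OF assms(2)]
      by (force simp: A_def B_def)
    then show ?thesis by (simp add: A_def B_def l2_sqnorm_nonneg)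
  next
    case False
    define t where "t = sqrt A / sqrt B"
    have "A > 0" "B > 0" using False l2_sqnorm_nonneg by (auto simp: A_def B_def less_le)
    then have t: "t > 0" by (simp add: t_def)
    \<comment> \<open>weighted AM-GM, with the weight that balances the two sums\<close>
    have le: "cmod (a x) * cmod (b x) \<le> 1 / (2 * t) * (cmod (a x))\<^sup>2 + t / 2 * (cmod (b x))\<^sup>2" for x
      using t sum_squares_ge_zero[of "cmod (a x) - t * cmod (b x)" 0]
      by (simp add: power2_eq_square field_simps)
    have s1: "(\<lambda>x. 1 / (2 * t) * (cmod (a x))\<^sup>2) summable_on UNIV"
      by (intro summable_on_cmult_right l2_summable assms)
    have s2: "(\<lambda>x. t / 2 * (cmod (b x))\<^sup>2) summable_on UNIV"
      by (intro summable_on_cmult_right l2_summable assms)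
    have "(\<Sum>\<^sub>\<infinity>x. cmod (cnj (a x) * b x))
        \<le> (\<Sum>\<^sub>\<infinity>x. 1 / (2 * t) * (cmod (a x))\<^sup>2 + t / 2 * (cmod (b x))\<^sup>2)"
      by (rule infsum_mono[OF _ summable_on_add[OF s1 s2]])
        (use l2_inner_abs_summable[OF assms] le in \<open>simp_all add: norm_mult\<close>)
    also have "\<dots> = A / (2 * t) + t * B / 2"
      unfolding A_def B_def l2_sqnorm_def infsum_add[OF s1 s2] infsum_cmult_right' by simp
    also have "\<dots> = sqrt A * sqrt B"
      using False l2_sqnorm_nonneg[of a] l2_sqnorm_nonneg[of b]
      by (simp add: t_def A_def[symmetric] B_def[symmetric] field_simps real_sqrt_mult[symmetric])
    finally show ?thesis .
  qed
  finally show ?thesis by (simp add: l2_norm_eq_sqrt_sqnorm A_def B_def)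
qed

lemma l2_inner_diff_right:
  assumes "a \<in> l2" "b \<in> l2" "c \<in> l2"
  shows "l2_inner a (\<lambda>x. b x - c x) = l2_inner a b - l2_inner a c"
proof -
  have summable: "(\<lambda>x. cnj (a x) * b x) summable_on UNIV" if "b \<in> l2" for b
    by (rule abs_summable_summable)
      (use l2_inner_abs_summable[OF assms(1) that] in \<open>simp add: norm_mult\<close>)
  have "(\<Sum>\<^sub>\<infinity>x. cnj (a x) * b x + - (cnj (a x) * c x))
      = (\<Sum>\<^sub>\<infinity>x. cnj (a x) * b x) + (\<Sum>\<^sub>\<infinity>x. - (cnj (a x) * c x))"
    by (rule infsum_add[OF summable[OF assms(2)] summable_on_uminus[THEN iffD2, OF summable[OF assms(3)]]])
  then show ?thesis
    unfolding l2_inner_def by (simp add: right_diff_distrib infsum_uminus)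
qed

lemma l2_inner_tendsto_right:
  assumes "a \<in> l2" "b \<in> l2" "\<And>n. B n \<in> l2"
    and "(\<lambda>n. l2_norm (\<lambda>x. B n x - b x)) \<longlonglongrightarrow> 0"
  shows "(\<lambda>n. l2_inner a (B n)) \<longlonglongrightarrow> l2_inner a b"
proof -
  have bound: "norm (l2_inner a (B n) - l2_inner a b) \<le> l2_norm a * l2_norm (\<lambda>x. B n x - b x)" for n
    using l2_cauchy_schwarz[OF assms(1) l2_diff(1)[OF assms(3,2)]]
    by (simp add: l2_inner_diff_right assms)
  have "(\<lambda>n. l2_norm a * l2_norm (\<lambda>x. B n x - b x)) \<longlonglongrightarrow> 0"
    by (rule tendsto_mult_right_zero[OF assms(4)])
  then have "(\<lambda>n. l2_inner a (B n) - l2_inner a b) \<longlonglongrightarrow> 0"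
    by (rule Lim_null_comparison[OF always_eventually, rotated]) (use bound in blast)
  then show ?thesis by (simp add: LIM_zero_iff)
qed

lemma l2_inner_tendsto_left:
  assumes "a \<in> l2" "b \<in> l2" "\<And>n. A n \<in> l2"
    and "(\<lambda>n. l2_norm (\<lambda>x. A n x - a x)) \<longlonglongrightarrow> 0"
  shows "(\<lambda>n. l2_inner (A n) b) \<longlonglongrightarrow> l2_inner a b"
  using tendsto_cnj[OF l2_inner_tendsto_right[OF assms(2,1,3,4)]]
  by (subst (1 2) l2_inner_cnj) simp

lemma l2_cutoff_tail:
  assumes "u \<in> l2" "e > 0"
  obtains F where "finite F"
    "\<And>\<phi>. (\<And>x. x \<in> F \<Longrightarrow> \<phi> x = 1) \<Longrightarrow> (\<And>x. 0 \<le> \<phi> x \<and> \<phi> x \<le> 1)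
       \<Longrightarrow> l2_sqnorm (\<lambda>x. complex_of_real (\<phi> x) * u x - u x) \<le> e"
proof -
  let ?g = "\<lambda>x. (cmod (u x))\<^sup>2"
  obtain F where F: "finite F" "dist (sum ?g F) (infsum ?g UNIV) \<le> e"
    using infsum_finite_approximation[OF l2_summable[OF assms(1)] assms(2)] by blast
  have "infsum ?g (F \<union> - F) = infsum ?g F + infsum ?g (- F)"
    by (rule infsum_Un_disjoint) (auto intro: l2_summable assms(1))
  then have "infsum ?g UNIV = sum ?g F + infsum ?g (- F)" using F(1) by simp
  then have tail: "infsum ?g (- F) \<le> e" using F(2) by (simp add: dist_real_def)
  show ?thesis
  proof (rule that[OF F(1)])
    fix \<phi> :: "'a \<Rightarrow> real"
    assume one: "\<And>x. x \<in> F \<Longrightarrow> \<phi> x = 1" and range: "\<And>x. 0 \<le> \<phi> x \<and> \<phi> x \<le> 1"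
    let ?h = "\<lambda>x. if x \<in> F then 0 else ?g x"
    have h: "?h summable_on UNIV"
      using l2_summable[OF assms(1), of "- F"]
      by (rule summable_on_cong_neutral[THEN iffD1, rotated -1]) auto
    have h_sum: "infsum ?h UNIV = infsum ?g (- F)"
      by (rule infsum_cong_neutral) auto
    have le: "(cmod (complex_of_real (\<phi> x) * u x - u x))\<^sup>2 \<le> ?h x" for x
    proof -
      have "complex_of_real (\<phi> x) * u x - u x = complex_of_real (\<phi> x - 1) * u x"
        by (simp add: algebra_simps)
      then have "cmod (complex_of_real (\<phi> x) * u x - u x) = \<bar>\<phi> x - 1\<bar> * cmod (u x)"
        by (simp only: norm_mult norm_of_real)
      also have "\<dots> \<le> (if x \<in> F then 0 else cmod (u x))"
        using one[of x] range[of x] by (auto intro!: mult_left_le_one_le)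
      finally show ?thesis by (auto simp: power_mono)
    qed
    have "(\<lambda>x. (cmod (complex_of_real (\<phi> x) * u x - u x))\<^sup>2) summable_on UNIV"
      by (rule summable_on_comparison_test[OF h]) (use le in auto)
    then have "l2_sqnorm (\<lambda>x. complex_of_real (\<phi> x) * u x - u x) \<le> infsum ?h UNIV"
      unfolding l2_sqnorm_def by (rule infsum_mono[OF _ h le])
    then show "l2_sqnorm (\<lambda>x. complex_of_real (\<phi> x) * u x - u x) \<le> e"
      using h_sum tail by simp
  qed
qed

lemma l2_cutoff_tendsto:
  assumes "u \<in> l2" "\<And>N x. 0 \<le> \<phi> N x \<and> \<phi> N x \<le> 1"
    and "\<And>x. eventually (\<lambda>N. \<phi> N x = 1) sequentially"
  shows "(\<lambda>N. l2_sqnorm (\<lambda>x. complex_of_real (\<phi> N x) * u x - u x)) \<longlonglongrightarrow> 0"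
proof (rule LIMSEQ_I)
  fix r :: real assume "0 < r"
  then obtain F where F: "finite F"
    "\<And>\<phi>. (\<And>x. x \<in> F \<Longrightarrow> \<phi> x = 1) \<Longrightarrow> (\<And>x. 0 \<le> \<phi> x \<and> \<phi> x \<le> 1)
       \<Longrightarrow> l2_sqnorm (\<lambda>x. complex_of_real (\<phi> x) * u x - u x) \<le> r / 2"
    using l2_cutoff_tail[OF assms(1) half_gt_zero[OF \<open>0 < r\<close>]] by blast
  have "eventually (\<lambda>N. \<forall>x\<in>F. \<phi> N x = 1) sequentially"
    using F(1) assms(3) by (simp add: eventually_ball_finite_distrib)
  then obtain N0 where N0: "\<And>N x. N \<ge> N0 \<Longrightarrow> x \<in> F \<Longrightarrow> \<phi> N x = 1"
    by (auto simp: eventually_sequentially)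
  show "\<exists>N0. \<forall>N\<ge>N0. norm (l2_sqnorm (\<lambda>x. complex_of_real (\<phi> N x) * u x - u x) - 0) < r"
  proof (intro exI allI impI)
    fix N assume "N \<ge> N0"
    then have "l2_sqnorm (\<lambda>x. complex_of_real (\<phi> N x) * u x - u x) \<le> r / 2"
      using N0 assms(2) by (intro F(2)) auto
    then show "norm (l2_sqnorm (\<lambda>x. complex_of_real (\<phi> N x) * u x - u x) - 0) < r"
      using \<open>0 < r\<close> l2_sqnorm_nonneg[of "\<lambda>x. complex_of_real (\<phi> N x) * u x - u x"] by simp
  qed
qed

lemma fin_supp_dense:
  assumes "f \<in> l2"
  obtains F where "\<And>n. F n \<in> fin_supp" "(\<lambda>n. l2_norm (\<lambda>x. F n x - f x)) \<longlonglongrightarrow> 0"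
proof -
  have "\<exists>A. finite A \<and> l2_sqnorm (\<lambda>x. (if x \<in> A then f x else 0) - f x) \<le> 1 / Suc n" for n
  proof -
    have pos: "(0::real) < 1 / Suc n" by simp
    obtain A where A: "finite A"
      "\<And>\<phi>. (\<And>x. x \<in> A \<Longrightarrow> \<phi> x = 1) \<Longrightarrow> (\<And>x. 0 \<le> \<phi> x \<and> \<phi> x \<le> 1)
         \<Longrightarrow> l2_sqnorm (\<lambda>x. complex_of_real (\<phi> x) * f x - f x) \<le> 1 / Suc n"
      using l2_cutoff_tail[OF assms pos] by blast
    have "l2_sqnorm (\<lambda>x. complex_of_real (if x \<in> A then 1 else 0) * f x - f x) \<le> 1 / Suc n"
      by (rule A(2)) auto
    moreover have "(\<lambda>x. complex_of_real (if x \<in> A then 1 else 0) * f x - f x)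
        = (\<lambda>x. (if x \<in> A then f x else 0) - f x)"
      by auto
    ultimately show ?thesis using A(1) by (intro exI[of _ A]) simp
  qed
  then obtain A where A: "\<And>n. finite (A n)"
    "\<And>n. l2_sqnorm (\<lambda>x. (if x \<in> A n then f x else 0) - f x) \<le> 1 / Suc n"
    by metis
  show ?thesis
  proof (rule that)
    show "(\<lambda>x. if x \<in> A n then f x else 0) \<in> fin_supp" for n
      using A(1)[of n] by (simp add: fin_supp_def)
    show "(\<lambda>n. l2_norm (\<lambda>x. (if x \<in> A n then f x else 0) - f x)) \<longlonglongrightarrow> 0"
      unfolding l2_norm_tendsto_0_iff
      by (rule l2_sqnorm_tendsto_0_squeeze[OF A(2) LIMSEQ_inverse_real_of_nat[unfolded inverse_eq_divide]])
  qed
qed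

section \<open>Closures and adjoints of graphs\<close>

lemma subset_graph_closure:
  assumes "G \<subseteq> l2 \<times> l2"
  shows "G \<subseteq> graph_closure G"
proof clarify
  fix f g assume "(f, g) \<in> G"
  moreover have "l2_norm (\<lambda>x. h x - h x) = 0" for h :: "'a \<Rightarrow> complex"
    by (simp add: l2_norm_def)
  ultimately show "(f, g) \<in> graph_closure G"
    using assms unfolding graph_closure_def
    by (intro CollectI case_prodI conjI exI[of _ "\<lambda>_. f"] exI[of _ "\<lambda>_. g"]) auto
qed

lemma adjoint_graph_subset: "adjoint_graph G \<subseteq> l2 \<times> l2"
  by (auto simp: adjoint_graph_def)

lemma adjoint_graph_graph_closure:
  assumes "G \<subseteq> l2 \<times> l2"
  shows "adjoint_graph (graph_closure G) = adjoint_graph G"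
proof
  show "adjoint_graph (graph_closure G) \<subseteq> adjoint_graph G"
    using subset_graph_closure[OF assms] by (auto simp: adjoint_graph_def)
next
  show "adjoint_graph G \<subseteq> adjoint_graph (graph_closure G)"
  proof clarify
    fix u w assume uw: "(u, w) \<in> adjoint_graph G"
    then have u: "u \<in> l2" "w \<in> l2" by (auto simp: adjoint_graph_def)
    have "l2_inner g u = l2_inner f w" if fg: "(f, g) \<in> graph_closure G" for f g
    proof -
      obtain F H where "f \<in> l2" "g \<in> l2" and FH: "\<And>n. (F n, H n) \<in> G"
        "(\<lambda>n. l2_norm (\<lambda>x. F n x - f x)) \<longlonglongrightarrow> 0" "(\<lambda>n. l2_norm (\<lambda>x. H n x - g x)) \<longlonglongrightarrow> 0"
        using fg by (auto simp: graph_closure_def)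
      moreover have "F n \<in> l2" "H n \<in> l2" for n using assms FH(1) by auto
      ultimately have "(\<lambda>n. l2_inner (H n) u) \<longlonglongrightarrow> l2_inner g u"
        "(\<lambda>n. l2_inner (F n) w) \<longlonglongrightarrow> l2_inner f w"
        by (auto intro: l2_inner_tendsto_left u)
      moreover have "l2_inner (H n) u = l2_inner (F n) w" for n
        using uw FH(1) by (fastforce simp: adjoint_graph_def)
      ultimately show ?thesis using LIMSEQ_unique by force
    qed
    then show "(u, w) \<in> adjoint_graph (graph_closure G)"
      using u by (auto simp: adjoint_graph_def)
  qed
qed

lemma graph_closure_subset_adjoint_graph:
  assumes "G \<subseteq> adjoint_graph G"
  shows "graph_closure G \<subseteq> adjoint_graph G"
proof clarify
  fix u w assume "(u, w) \<in> graph_closure G"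
  then obtain U W where u: "u \<in> l2" "w \<in> l2" and UW: "\<And>n. (U n, W n) \<in> G"
    "(\<lambda>n. l2_norm (\<lambda>x. U n x - u x)) \<longlonglongrightarrow> 0" "(\<lambda>n. l2_norm (\<lambda>x. W n x - w x)) \<longlonglongrightarrow> 0"
    by (auto simp: graph_closure_def)
  have "l2_inner g u = l2_inner f w" if fg: "(f, g) \<in> G" for f g
  proof -
    have "U n \<in> l2" "W n \<in> l2" "f \<in> l2" "g \<in> l2" for n
      using assms adjoint_graph_subset UW(1) fg by blast+
    then have "(\<lambda>n. l2_inner g (U n)) \<longlonglongrightarrow> l2_inner g u"
      "(\<lambda>n. l2_inner f (W n)) \<longlonglongrightarrow> l2_inner f w"
      by (auto intro: l2_inner_tendsto_right u UW)
    moreover have "l2_inner g (U n) = l2_inner f (W n)" for n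
      using assms UW(1) fg by (fastforce simp: adjoint_graph_def)
    ultimately show ?thesis using LIMSEQ_unique by force
  qed
  then show "(u, w) \<in> adjoint_graph G"
    using u by (auto simp: adjoint_graph_def)
qed

lemma essentially_selfadjointI:
  assumes "G \<subseteq> adjoint_graph G" "densely_defined G" "adjoint_graph G \<subseteq> graph_closure G"
  shows "essentially_selfadjoint G"
proof -
  have G: "G \<subseteq> l2 \<times> l2" using assms(1) adjoint_graph_subset by blast
  have "adjoint_graph (graph_closure G) = graph_closure G"
    using adjoint_graph_graph_closure[OF G] graph_closure_subset_adjoint_graph[OF assms(1)] assms(3)
    by blast
  moreover have "densely_defined (graph_closure G)"
  proof -
    have "op_domain G \<subseteq> op_domain (graph_closure G)" "op_domain (graph_closure G) \<subseteq> l2"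
      using subset_graph_closure[OF G] by (auto simp: op_domain_def graph_closure_def)
    then show ?thesis using assms(2) unfolding densely_defined_def by blast
  qed
  ultimately show ?thesis by (simp add: essentially_selfadjoint_def selfadjoint_op_def)
qed

lemma infsum_eq_sum_superset:
  assumes "finite S" "\<And>x. x \<notin> S \<Longrightarrow> f x = 0"
  shows "infsum f UNIV = sum f S"
  using infsum_cong_neutral[of S UNIV f f] assms by simp

lemma finite_support_comp_parent:
  assumes "\<And>x. finite (children p x)" "finite {z. f z \<noteq> 0}"
  shows "finite {x. f (p x) \<noteq> 0}"
proof -
  have "{x. f (p x) \<noteq> 0} = (\<Union>z\<in>{z. f z \<noteq> 0}. children p z)"
    by (auto simp: children_def)
  then show ?thesis using assms by simp
qed

lemma finite_support_sum_children:
  assumes "finite {y. f y \<noteq> 0}"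
  shows "finite {x. (\<Sum>y\<in>children p x. f y) \<noteq> 0}"
proof (rule finite_subset[OF _ finite_imageI[OF assms, of p]])
  show "{x. (\<Sum>y\<in>children p x. f y) \<noteq> 0} \<subseteq> p ` {y. f y \<noteq> 0}"
    by (force simp: children_def dest: sum.not_neutral_contains_not_neutral)
qed

lemma infsum_parent_regroup:
  fixes G H :: "'v \<Rightarrow> complex"
  assumes fin: "\<And>x. finite (children p x)"
    and supp: "finite {z. G z \<noteq> 0} \<or> finite {x. H x \<noteq> 0}"
  shows "(\<Sum>\<^sub>\<infinity>x. G (p x) * H x) = (\<Sum>\<^sub>\<infinity>z. G z * (\<Sum>x\<in>children p z. H x))"
proof -
  define Z where "Z = (if finite {z. G z \<noteq> 0} then {z. G z \<noteq> 0} else p ` {x. H x \<noteq> 0})"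
  have Z: "finite Z" using supp by (auto simp: Z_def)
  have parent_in_Z: "G (p x) * H x \<noteq> 0 \<Longrightarrow> p x \<in> Z" for x
    by (auto simp: Z_def)
  have "(\<Sum>\<^sub>\<infinity>x. G (p x) * H x) = (\<Sum>x\<in>(\<Union>z\<in>Z. children p z). G (p x) * H x)"
    by (rule infsum_eq_sum_superset) (use Z fin parent_in_Z in \<open>auto simp: children_def\<close>)
  also have "\<dots> = (\<Sum>z\<in>Z. \<Sum>x\<in>children p z. G (p x) * H x)"
    by (rule sum.UNION_disjoint) (use Z fin in \<open>auto simp: children_def\<close>)
  also have "\<dots> = (\<Sum>z\<in>Z. G z * (\<Sum>x\<in>children p z. H x))"
    by (simp add: sum_distrib_left children_def)
  also have "\<dots> = (\<Sum>\<^sub>\<infinity>z. G z * (\<Sum>x\<in>children p z. H x))"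
  proof (rule infsum_eq_sum_superset[symmetric, OF Z])
    fix z assume "z \<notin> Z"
    then show "G z * (\<Sum>x\<in>children p z. H x) = 0"
      using parent_in_Z by (auto simp: children_def intro!: sum.neutral)
  qed
  finally show ?thesis .
qed

lemma jacobi_fin_supp:
  assumes fin: "\<And>x. finite (children p x)" and f: "f \<in> fin_supp"
  shows "jacobi p lam beta f \<in> fin_supp"
proof -
  have S: "finite {x. f x \<noteq> 0}" using f by (simp add: fin_supp_def)
  have "finite {x. (\<Sum>y\<in>children p x. complex_of_real (lam y) * f y) \<noteq> 0}"
    by (rule finite_support_sum_children, rule finite_subset[OF _ S]) auto
  then have "finite ({x. f (p x) \<noteq> 0} \<union> {x. f x \<noteq> 0}
      \<union> {x. (\<Sum>y\<in>children p x. complex_of_real (lam y) * f y) \<noteq> 0})"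
    using finite_support_comp_parent[OF fin S] S by simp
  moreover have "{x. jacobi p lam beta f x \<noteq> 0} \<subseteq> {x. f (p x) \<noteq> 0} \<union> {x. f x \<noteq> 0}
      \<union> {x. (\<Sum>y\<in>children p x. complex_of_real (lam y) * f y) \<noteq> 0}"
    by (auto simp: jacobi_def)
  ultimately show ?thesis unfolding fin_supp_def by (blast intro: finite_subset)
qed

lemma jacobi_symmetric:
  assumes fin: "\<And>x. finite (children p x)" and f: "f \<in> fin_supp"
  shows "l2_inner (jacobi p lam beta f) u = l2_inner f (jacobi p lam beta u)"
proof -
  let ?c = complex_of_real
  have S: "finite {x. f x \<noteq> 0}" using f by (simp add: fin_supp_def)
  have summable: "g summable_on UNIV" if "\<And>x. f x = 0 \<Longrightarrow> g x = 0" for g :: "'a \<Rightarrow> complex"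
    by (rule finite_nonzero_values_imp_summable_on, rule finite_subset[OF _ S]) (use that in auto)
  have summable': "g summable_on UNIV" if "finite {x. g x \<noteq> 0}" for g :: "'a \<Rightarrow> complex"
    by (rule finite_nonzero_values_imp_summable_on) (simp add: that)
  define A1 A2 A3 where
    "A1 x = cnj (f (p x)) * (?c (lam x) * u x)" and
    "A2 x = cnj (f x) * (?c (beta x) * u x)" and
    "A3 x = u x * (\<Sum>y\<in>children p x. ?c (lam y) * cnj (f y))" for x
  define B1 B2 where
    "B1 x = cnj (f x) * (?c (lam x) * u (p x))" and
    "B2 x = cnj (f x) * (\<Sum>y\<in>children p x. ?c (lam y) * u y)" for x
  have sA1: "A1 summable_on UNIV"
    by (rule summable', rule finite_subset[OF _ finite_support_comp_parent[OF fin S]])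
      (auto simp: A1_def)
  have sA3: "A3 summable_on UNIV"
    by (rule summable', rule finite_subset[OF _ finite_support_sum_children[of "\<lambda>y. ?c (lam y) * cnj (f y)" p]])
      (use S in \<open>auto simp: A3_def elim!: finite_subset[rotated]\<close>)
  have sA2: "A2 summable_on UNIV" and sB1: "B1 summable_on UNIV" and sB2: "B2 summable_on UNIV"
    by (auto intro!: summable simp: A2_def B1_def B2_def)
  have regroup1: "infsum A1 UNIV = infsum B2 UNIV"
    using infsum_parent_regroup[OF fin, of "\<lambda>x. cnj (f x)" "\<lambda>x. ?c (lam x) * u x"] S
    unfolding A1_def[abs_def] B2_def[abs_def] by simp
  have regroup2: "infsum A3 UNIV = infsum B1 UNIV"
    using infsum_parent_regroup[OF fin, of u "\<lambda>y. ?c (lam y) * cnj (f y)"] S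
    unfolding A3_def[abs_def] B1_def[abs_def] by (simp add: mult_ac)
  have "l2_inner (jacobi p lam beta f) u = (\<Sum>\<^sub>\<infinity>x. A1 x + A2 x + A3 x)"
    unfolding l2_inner_def A1_def A2_def A3_def jacobi_def
    by (simp add: algebra_simps sum_distrib_left)
  also have "\<dots> = infsum A1 UNIV + infsum A2 UNIV + infsum A3 UNIV"
    by (simp add: infsum_add summable_on_add sA1 sA2 sA3)
  also have "\<dots> = infsum B2 UNIV + infsum A2 UNIV + infsum B1 UNIV"
    using regroup1 regroup2 by simp
  also have "\<dots> = (\<Sum>\<^sub>\<infinity>x. B1 x + A2 x + B2 x)"
    by (simp add: infsum_add summable_on_add sB1 sA2 sB2)
  also have "\<dots> = l2_inner f (jacobi p lam beta u)"
    unfolding l2_inner_def B1_def A2_def B2_def jacobi_def by (simp add: algebra_simps)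
  finally show ?thesis .
qed

lemma jacobi_graph_symmetric:
  assumes "\<And>x. finite (children p x)"
  shows "jacobi_graph p lam beta \<subseteq> adjoint_graph (jacobi_graph p lam beta)"
  using jacobi_symmetric[OF assms] jacobi_fin_supp[OF assms]
  by (auto simp: jacobi_graph_def adjoint_graph_def fin_supp_l2)

lemma jacobi_graph_densely_defined:
  assumes "\<And>x. finite (children p x)"
  shows "densely_defined (jacobi_graph p lam beta)"
  unfolding densely_defined_def op_domain_def
proof (intro conjI ballI)
  show "fst ` jacobi_graph p lam beta \<subseteq> l2"
    by (auto simp: jacobi_graph_def fin_supp_l2)
  fix f :: "'a \<Rightarrow> complex" assume "f \<in> l2"
  then obtain F where "\<And>n. F n \<in> fin_supp" "(\<lambda>n. l2_norm (\<lambda>x. F n x - f x)) \<longlonglongrightarrow> 0"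
    using fin_supp_dense by blast
  then show "\<exists>F. (\<forall>n. F n \<in> fst ` jacobi_graph p lam beta) \<and> (\<lambda>n. l2_norm (\<lambda>x. F n x - f x)) \<longlonglongrightarrow> 0"
    by (intro exI[of _ F]) (force simp: jacobi_graph_def)
qed

lemma adjoint_jacobi_graph:
  fixes p :: "'v \<Rightarrow> 'v"
  assumes fin: "\<And>x. finite (children p x)"
    and "(u, w) \<in> adjoint_graph (jacobi_graph p lam beta)"
  shows "w = jacobi p lam beta u"
proof
  fix x :: 'v
  define \<delta> where "\<delta> = (\<lambda>z. if z = x then 1 else 0 :: complex)"
  have \<delta>: "\<delta> \<in> fin_supp" by (simp add: fin_supp_def \<delta>_def)
  have pair: "l2_inner \<delta> v = v x" for v
    unfolding l2_inner_def by (subst infsum_eq_sum_superset[of "{x}"]) (auto simp: \<delta>_def)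
  have "w x = l2_inner (jacobi p lam beta \<delta>) u"
    using assms(2) \<delta> by (auto simp: adjoint_graph_def jacobi_graph_def pair)
  also have "\<dots> = jacobi p lam beta u x"
    by (simp add: jacobi_symmetric[OF fin \<delta>] pair)
  finally show "w x = jacobi p lam beta u x" .
qed

section \<open>Approximation by cutoffs\<close>

lemma l2_pullback_inj_on:
  assumes "u \<in> l2" "inj_on p A"
  shows "(\<lambda>x. if x \<in> A then u (p x) else 0) \<in> l2"
    "l2_sqnorm (\<lambda>x. if x \<in> A then u (p x) else 0) \<le> l2_sqnorm u"
proof -
  let ?g = "\<lambda>x. (cmod (u x))\<^sup>2"
  let ?h = "\<lambda>x. (cmod (if x \<in> A then u (p x) else 0))\<^sup>2"
  have "(?g \<circ> p) summable_on A"
    using summable_on_reindex[OF assms(2), of ?g] l2_summable[OF assms(1)] by simp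
  then have "?h summable_on UNIV"
    by (rule summable_on_cong_neutral[THEN iffD1, rotated -1]) auto
  then show "(\<lambda>x. if x \<in> A then u (p x) else 0) \<in> l2" by (simp add: l2_def)
  have "l2_sqnorm (\<lambda>x. if x \<in> A then u (p x) else 0) = infsum (?g \<circ> p) A"
    unfolding l2_sqnorm_def by (rule infsum_cong_neutral) auto
  also have "\<dots> = infsum ?g (p ` A)" by (rule infsum_reindex[OF assms(2), symmetric])
  also have "\<dots> \<le> infsum ?g UNIV"
    by (rule infsum_mono2) (auto intro: l2_summable assms(1))
  finally show "l2_sqnorm (\<lambda>x. if x \<in> A then u (p x) else 0) \<le> l2_sqnorm u"
    by (simp add: l2_sqnorm_def)
qed

lemma l2_pushforward_inj_on:
  assumes "h \<in> l2" "inj_on p A" "\<And>y. y \<notin> A \<Longrightarrow> h y = 0" "\<And>x. finite (children p x)"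
  shows "(\<lambda>x. \<Sum>y\<in>children p x. h y) \<in> l2"
    "l2_sqnorm (\<lambda>x. \<Sum>y\<in>children p x. h y) = l2_sqnorm h"
proof -
  let ?H = "\<lambda>x. \<Sum>y\<in>children p x. h y"
  have H_parent: "?H (p y) = h y" if "y \<in> A" for y
  proof -
    have "?H (p y) = h y + (\<Sum>z\<in>children p (p y) - {y}. h z)"
      by (rule sum.remove) (use assms(4)[of "p y"] in \<open>auto simp: children_def\<close>)
    also have "(\<Sum>z\<in>children p (p y) - {y}. h z) = 0"
      using assms(2,3) that by (intro sum.neutral) (auto simp: children_def inj_on_def)
    finally show ?thesis by simp
  qed
  have H_zero: "?H x = 0" if "x \<notin> p ` A" for x
    using assms(3) that by (intro sum.neutral) (auto simp: children_def)
  let ?g = "\<lambda>x. (cmod (?H x))\<^sup>2"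
  have "(\<lambda>y. (cmod (h y))\<^sup>2) summable_on A" by (rule l2_summable[OF assms(1)])
  then have "(?g \<circ> p) summable_on A"
    by (rule summable_on_cong[THEN iffD1, rotated]) (simp add: H_parent)
  then have "?g summable_on p ` A" using summable_on_reindex[OF assms(2)] by blast
  then have "?g summable_on UNIV"
    by (rule summable_on_cong_neutral[THEN iffD1, rotated -1]) (auto simp: H_zero)
  then show "?H \<in> l2" by (simp add: l2_def)
  have "l2_sqnorm ?H = infsum ?g (p ` A)"
    unfolding l2_sqnorm_def by (rule infsum_cong_neutral) (auto simp: H_zero)
  also have "\<dots> = infsum (?g \<circ> p) A" by (rule infsum_reindex[OF assms(2)])
  also have "\<dots> = infsum (\<lambda>y. (cmod (h y))\<^sup>2) A" by (rule infsum_cong) (simp add: H_parent)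
  also have "\<dots> = l2_sqnorm h"
    unfolding l2_sqnorm_def by (rule infsum_cong_neutral) (auto simp: assms(3))
  finally show "l2_sqnorm ?H = l2_sqnorm h" .
qed

locale jacobi_cutoffs =
  fixes p :: "'v \<Rightarrow> 'v" and lam :: "'v \<Rightarrow> real" and \<phi> :: "nat \<Rightarrow> 'v \<Rightarrow> real"
    and A :: "'v set" and \<epsilon> :: "nat \<Rightarrow> real"
  assumes finite_children: "finite (children p x)"
    and cutoff_range: "0 \<le> \<phi> N x \<and> \<phi> N x \<le> 1"
    and cutoff_finite: "finite {x. \<phi> N x \<noteq> 0}"
    and cutoff_eventually_one: "eventually (\<lambda>N. \<phi> N x = 1) sequentially"
    and inj_on_A: "inj_on p A"
    and cutoff_flat: "y \<notin> A \<Longrightarrow> \<phi> N (p y) = \<phi> N y"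
    and slope_bound: "\<bar>lam y * (\<phi> N (p y) - \<phi> N y)\<bar> \<le> \<epsilon> N"
    and slope_bound_tendsto: "\<epsilon> \<longlonglongrightarrow> 0"
begin

definition slope :: "nat \<Rightarrow> 'v \<Rightarrow> complex" where
  "slope N y = complex_of_real (lam y * (\<phi> N (p y) - \<phi> N y))"

lemma slope_outside: "y \<notin> A \<Longrightarrow> slope N y = 0"
  by (simp add: slope_def cutoff_flat)

lemma norm_slope: "cmod (slope N y) \<le> \<epsilon> N"
  unfolding slope_def norm_of_real by (rule slope_bound)

definition commutator :: "nat \<Rightarrow> ('v \<Rightarrow> complex) \<Rightarrow> 'v \<Rightarrow> complex" where
  "commutator N u x = slope N x * u (p x) - (\<Sum>y\<in>children p x. slope N y * u y)"

lemma jacobi_commutator: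
  "jacobi p lam beta (\<lambda>x. complex_of_real (\<phi> N x) * u x) x
     - complex_of_real (\<phi> N x) * jacobi p lam beta u x = commutator N u x"
proof -
  let ?c = complex_of_real
  have "(\<Sum>y\<in>children p x. slope N y * u y)
      = (\<Sum>y\<in>children p x. ?c (\<phi> N x) * (?c (lam y) * u y) - ?c (lam y) * (?c (\<phi> N y) * u y))"
    by (intro sum.cong refl) (simp add: children_def slope_def algebra_simps)
  also have "\<dots> = ?c (\<phi> N x) * (\<Sum>y\<in>children p x. ?c (lam y) * u y)
      - (\<Sum>y\<in>children p x. ?c (lam y) * (?c (\<phi> N y) * u y))"
    by (simp only: sum_subtractf sum_distrib_left)
  finally show ?thesis
    by (simp add: jacobi_def commutator_def slope_def algebra_simps)
qed

lemma commutator_l2: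
  assumes "u \<in> l2"
  shows "commutator N u \<in> l2" "l2_sqnorm (commutator N u) \<le> 4 * (\<epsilon> N)\<^sup>2 * l2_sqnorm u"
proof -
  have \<epsilon>: "\<epsilon> N \<ge> 0" using slope_bound order_trans abs_ge_zero by blast
  obtain up: "(\<lambda>x. if x \<in> A then u (p x) else 0) \<in> l2"
    "l2_sqnorm (\<lambda>x. if x \<in> A then u (p x) else 0) \<le> l2_sqnorm u"
    using l2_pullback_inj_on[OF assms(1) inj_on_A] by blast
  have "cmod (slope N x * u (p x)) \<le> \<epsilon> N * cmod (if x \<in> A then u (p x) else 0)" for x
    using norm_slope[of N x] slope_outside[of x N]
    by (auto simp: norm_mult intro: mult_right_mono)
  note t1 = l2_dominated[OF up(1) this]
  have t1_bound: "l2_sqnorm (\<lambda>x. slope N x * u (p x)) \<le> (\<epsilon> N)\<^sup>2 * l2_sqnorm u"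
    using t1(2) mult_left_mono[OF up(2) zero_le_power2[of "\<epsilon> N"]] by linarith
  have "cmod (slope N y * u y) \<le> \<epsilon> N * cmod (u y)" for y
    using norm_slope[of N y] by (auto simp: norm_mult intro: mult_right_mono)
  from l2_dominated[OF assms(1) this]
  have t2: "(\<lambda>x. \<Sum>y\<in>children p x. slope N y * u y) \<in> l2"
    "l2_sqnorm (\<lambda>x. \<Sum>y\<in>children p x. slope N y * u y) \<le> (\<epsilon> N)\<^sup>2 * l2_sqnorm u"
    using l2_pushforward_inj_on[of "\<lambda>y. slope N y * u y", OF _ inj_on_A _ finite_children]
    by (simp_all add: slope_outside)
  have C: "commutator N u = (\<lambda>x. slope N x * u (p x) - (\<Sum>y\<in>children p x. slope N y * u y))"
    by (simp add: commutator_def[abs_def])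
  show "commutator N u \<in> l2" unfolding C by (rule l2_diff(1)[OF t1(1) t2(1)])
  show "l2_sqnorm (commutator N u) \<le> 4 * (\<epsilon> N)\<^sup>2 * l2_sqnorm u"
    using l2_diff(2)[OF t1(1) t2(1)] t1_bound t2(2) unfolding C by linarith
qed

lemma jacobi_cutoff_error:
  assumes u: "u \<in> l2" and Ju: "jacobi p lam beta u \<in> l2"
  defines "w \<equiv> jacobi p lam beta u"
  shows "l2_sqnorm (\<lambda>x. jacobi p lam beta (\<lambda>x. complex_of_real (\<phi> N x) * u x) x - w x)
    \<le> 2 * l2_sqnorm (\<lambda>x. complex_of_real (\<phi> N x) * w x - w x) + 8 * (\<epsilon> N)\<^sup>2 * l2_sqnorm u"
proof -
  let ?c = complex_of_real
  have "(\<lambda>x. ?c (\<phi> N x) * w x) \<in> l2"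
    by (rule l2_dominated(1)[OF Ju[folded w_def], of _ 1])
      (use cutoff_range in \<open>auto simp: norm_mult intro: mult_left_le_one_le\<close>)
  then have cut_w: "(\<lambda>x. ?c (\<phi> N x) * w x - w x) \<in> l2"
    by (rule l2_diff(1)[OF _ Ju[folded w_def]])
  have "(\<lambda>x. jacobi p lam beta (\<lambda>x. ?c (\<phi> N x) * u x) x - w x)
      = (\<lambda>x. (?c (\<phi> N x) * w x - w x) + commutator N u x)"
    unfolding w_def jacobi_commutator[of beta N u, symmetric] by simp
  then have "l2_sqnorm (\<lambda>x. jacobi p lam beta (\<lambda>x. ?c (\<phi> N x) * u x) x - w x)
      \<le> 2 * l2_sqnorm (\<lambda>x. ?c (\<phi> N x) * w x - w x) + 2 * l2_sqnorm (commutator N u)"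
    using l2_add(2)[OF cut_w commutator_l2(1)[OF u]] by simp
  then show ?thesis using commutator_l2(2)[OF u, of N] by linarith
qed

lemma jacobi_cutoff_tendsto:
  assumes u: "u \<in> l2" and w: "jacobi p lam beta u \<in> l2"
  shows "(\<lambda>N. l2_norm (\<lambda>x. jacobi p lam beta (\<lambda>x. complex_of_real (\<phi> N x) * u x) x
      - jacobi p lam beta u x)) \<longlonglongrightarrow> 0"
  unfolding l2_norm_tendsto_0_iff
proof (rule l2_sqnorm_tendsto_0_squeeze[OF jacobi_cutoff_error[OF u w]])
  let ?w = "jacobi p lam beta u"
  have "(\<lambda>N. l2_sqnorm (\<lambda>x. complex_of_real (\<phi> N x) * ?w x - ?w x)) \<longlonglongrightarrow> 0"
    by (rule l2_cutoff_tendsto[OF w cutoff_range cutoff_eventually_one])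
  then have "(\<lambda>N. 2 * l2_sqnorm (\<lambda>x. complex_of_real (\<phi> N x) * ?w x - ?w x)
      + 8 * (\<epsilon> N)\<^sup>2 * l2_sqnorm u) \<longlonglongrightarrow> 2 * 0 + 8 * 0\<^sup>2 * l2_sqnorm u"
    by (intro tendsto_intros slope_bound_tendsto)
  then show "(\<lambda>N. 2 * l2_sqnorm (\<lambda>x. complex_of_real (\<phi> N x) * ?w x - ?w x)
      + 8 * (\<epsilon> N)\<^sup>2 * l2_sqnorm u) \<longlonglongrightarrow> 0"
    by simp
qed

lemma maximal_domain_subset_closure:
  assumes u: "u \<in> l2" and w: "jacobi p lam beta u \<in> l2"
  shows "(u, jacobi p lam beta u) \<in> graph_closure (jacobi_graph p lam beta)"
proof -
  define F where "F N = (\<lambda>x. complex_of_real (\<phi> N x) * u x)" for N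
  have F: "(F N, jacobi p lam beta (F N)) \<in> jacobi_graph p lam beta" for N
    using cutoff_finite[of N] by (auto simp: jacobi_graph_def fin_supp_def F_def
        elim!: finite_subset[rotated])
  have "(\<lambda>N. l2_norm (\<lambda>x. F N x - u x)) \<longlonglongrightarrow> 0"
    unfolding l2_norm_tendsto_0_iff F_def
    by (rule l2_cutoff_tendsto[OF u cutoff_range cutoff_eventually_one])
  moreover have "(\<lambda>N. l2_norm (\<lambda>x. jacobi p lam beta (F N) x - jacobi p lam beta u x)) \<longlonglongrightarrow> 0"
    unfolding F_def by (rule jacobi_cutoff_tendsto[OF u w])
  ultimately show ?thesis
    unfolding graph_closure_def using u w F
    by (intro CollectI case_prodI conjI exI[of _ F] exI[of _ "\<lambda>N. jacobi p lam beta (F N)"] allI)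
qed

lemma adjoint_jacobi_graph_subset_closure:
  "adjoint_graph (jacobi_graph p lam beta) \<subseteq> graph_closure (jacobi_graph p lam beta)"
proof clarify
  fix u w assume uw: "(u, w) \<in> adjoint_graph (jacobi_graph p lam beta)"
  then have "w = jacobi p lam beta u" by (rule adjoint_jacobi_graph[OF finite_children])
  moreover have "u \<in> l2" "w \<in> l2" using uw by (auto simp: adjoint_graph_def)
  ultimately show "(u, w) \<in> graph_closure (jacobi_graph p lam beta)"
    using maximal_domain_subset_closure by simp
qed

end

section \<open>Cutoffs along a spine\<close>

locale spine =
  fixes lvl :: "'v \<Rightarrow> nat" and p :: "'v \<Rightarrow> 'v" and lam :: "'v \<Rightarrow> real" and xs :: "nat \<Rightarrow> 'v"
  assumes tree: "level_tree lvl p"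
    and lam_pos: "\<forall>x. lam x > 0"
    and lvl_xs: "\<forall>n. lvl (xs n) = n"
    and p_xs: "\<forall>n. p (xs n) = xs (Suc n)"
    and divergent: "\<not> summable (\<lambda>n. 1 / lam (xs (Suc n)))"
begin

lemma finite_children: "finite (children p x)"
  using tree by (simp add: level_tree_def)

lemma lvl_funpow: "lvl ((p ^^ j) x) = lvl x + j"
  using tree by (induction j) (auto simp: level_tree_def)

lemma funpow_xs: "(p ^^ j) (xs m) = xs (m + j)"
  by (induction j) (auto simp: p_xs)

lemma xs_eq_iff: "xs i = xs j \<longleftrightarrow> i = j"
  using lvl_xs by (metis)

definition subtree :: "nat \<Rightarrow> 'v set" where
  "subtree m = {y. \<exists>j. (p ^^ j) y = xs m}"

lemma finite_subtree: "finite (subtree m)"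
proof -
  have finite_funpow_preimage: "finite {y. (p ^^ j) y = z}" for j z
  proof (induction j arbitrary: z)
    case (Suc j)
    have "{y. (p ^^ Suc j) y = z} = (\<Union>w\<in>{w. (p ^^ j) w = z}. children p w)"
      by (auto simp: children_def funpow_swap1)
    then show ?case using Suc finite_children by simp
  qed simp
  have "subtree m \<subseteq> (\<Union>j\<le>m. {y. (p ^^ j) y = xs m})"
  proof
    fix y assume "y \<in> subtree m"
    then obtain j where j: "(p ^^ j) y = xs m" by (auto simp: subtree_def)
    then have "lvl y + j = m" using lvl_funpow[of j y] lvl_xs by simp
    then show "y \<in> (\<Union>j\<le>m. {y. (p ^^ j) y = xs m})" using j by auto
  qed
  then show ?thesis by (rule finite_subset) (simp add: finite_funpow_preimage)
qed

lemma subtree_mono: "m \<le> m' \<Longrightarrow> subtree m \<subseteq> subtree m'"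
proof
  fix y assume "m \<le> m'" "y \<in> subtree m"
  then obtain j where j: "(p ^^ j) y = xs m" "m \<le> m'" by (auto simp: subtree_def)
  have "(p ^^ (m' - m + j)) y = (p ^^ (m' - m)) ((p ^^ j) y)" by (simp add: funpow_add)
  also have "\<dots> = xs m'" using j by (simp add: funpow_xs)
  finally show "y \<in> subtree m'" by (auto simp: subtree_def)
qed

lemma in_some_subtree: "\<exists>m. x \<in> subtree m"
proof -
  have "\<exists>n m. (p ^^ n) x = (p ^^ m) (xs 0)" using tree by (simp add: level_tree_def)
  then obtain n m where "(p ^^ n) x = (p ^^ m) (xs 0)" by blast
  then show ?thesis by (auto simp: subtree_def funpow_xs)
qed

lemma xs_in_subtree_iff: "xs k \<in> subtree m \<longleftrightarrow> k \<le> m"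
proof
  assume "xs k \<in> subtree m"
  then obtain j where "xs (k + j) = xs m" by (auto simp: subtree_def funpow_xs)
  then show "k \<le> m" by (simp add: xs_eq_iff)
next
  assume "k \<le> m"
  then have "(p ^^ (m - k)) (xs k) = xs m" by (simp add: funpow_xs)
  then show "xs k \<in> subtree m" by (auto simp: subtree_def)
qed

lemma parent_in_subtree_iff: "y \<notin> range xs \<Longrightarrow> p y \<in> subtree m \<longleftrightarrow> y \<in> subtree m"
proof
  assume "p y \<in> subtree m"
  then obtain k where "(p ^^ Suc k) y = xs m" by (auto simp: subtree_def funpow_swap1)
  then show "y \<in> subtree m" unfolding subtree_def by blast
next
  assume "y \<notin> range xs" "y \<in> subtree m"
  then obtain j where j: "(p ^^ j) y = xs m" by (auto simp: subtree_def)
  with \<open>y \<notin> range xs\<close> obtain k where "j = Suc k" by (cases j) auto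
  then have "(p ^^ k) (p y) = xs m" using j by (simp add: funpow_swap1)
  then show "p y \<in> subtree m" by (auto simp: subtree_def)
qed

text \<open>The index of the vertex where the path from x to the root meets the spine.\<close>
definition spine_index :: "'v \<Rightarrow> nat" where
  "spine_index x = (LEAST m. x \<in> subtree m)"

lemma spine_index_le_iff: "spine_index x \<le> m \<longleftrightarrow> x \<in> subtree m"
proof
  assume "spine_index x \<le> m"
  moreover have "x \<in> subtree (spine_index x)"
    unfolding spine_index_def by (rule LeastI_ex[OF in_some_subtree])
  ultimately show "x \<in> subtree m" using subtree_mono by blast
next
  assume "x \<in> subtree m" then show "spine_index x \<le> m"
    unfolding spine_index_def by (rule Least_le)
qed

lemma spine_index_xs: "spine_index (xs k) = k"
  using spine_index_le_iff[of "xs k" k] spine_index_le_iff[of "xs k" "spine_index (xs k)"]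
  by (simp add: xs_in_subtree_iff)

lemma spine_index_parent:
  assumes "y \<notin> range xs"
  shows "spine_index (p y) = spine_index y"
proof -
  have "spine_index (p y) \<le> m \<longleftrightarrow> spine_index y \<le> m" for m
    by (simp add: spine_index_le_iff parent_in_subtree_iff[OF assms])
  from this[of "spine_index y"] this[of "spine_index (p y)"] show ?thesis by simp
qed

definition spine_length :: "nat \<Rightarrow> real" where
  "spine_length k = (\<Sum>j<k. 1 / lam (xs j))"

lemma spine_length_mono: "k \<le> k' \<Longrightarrow> spine_length k \<le> spine_length k'"
  unfolding spine_length_def by (rule sum_mono2) (use lam_pos in \<open>auto intro: less_imp_le\<close>)

lemma spine_length_unbounded: "\<exists>k. B < spine_length k"
proof (rule ccontr)
  assume "\<nexists>k. B < spine_length k"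
  then have "summable (\<lambda>j. 1 / lam (xs j))"
    by (intro summableI_nonneg_bounded[of _ B])
      (use lam_pos in \<open>auto simp: spine_length_def not_less intro: less_imp_le\<close>)
  then show False using divergent summable_Suc_iff[of "\<lambda>j. 1 / lam (xs j)"] by simp
qed

definition cutoff :: "nat \<Rightarrow> 'v \<Rightarrow> real" where
  "cutoff N x = max 0 (min 1 (2 - spine_length (spine_index x) / Suc N))"

lemma cutoff_finite: "finite {x. cutoff N x \<noteq> 0}"
proof -
  obtain K where K: "2 * Suc N < spine_length K" using spine_length_unbounded by blast
  have "cutoff N x = 0" if "K \<le> spine_index x" for x
  proof -
    have "2 * Suc N \<le> spine_length (spine_index x)"
      using K spine_length_mono[OF that] by linarith
    then have "2 - spine_length (spine_index x) / Suc N \<le> 0" by (simp add: field_simps)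
    then show ?thesis by (simp add: cutoff_def)
  qed
  then have "{x. cutoff N x \<noteq> 0} \<subseteq> subtree K"
    by (force simp: spine_index_le_iff[symmetric])
  then show ?thesis using finite_subtree finite_subset by blast
qed

lemma cutoff_eventually_one: "eventually (\<lambda>N. cutoff N x = 1) sequentially"
proof -
  obtain N0 :: nat where "spine_length (spine_index x) \<le> N0" using real_arch_simple by blast
  then have "cutoff N x = 1" if "N \<ge> N0" for N
    using that by (auto simp: cutoff_def field_simps)
  then show ?thesis by (auto simp: eventually_sequentially)
qed

lemma cutoff_slope_bound: "\<bar>lam y * (cutoff N (p y) - cutoff N y)\<bar> \<le> 1 / Suc N"
proof (cases "y \<in> range xs")
  case True
  then obtain k where y: "y = xs k" by auto
  have clamp_lipschitz: "\<bar>max 0 (min 1 a) - max 0 (min 1 b)\<bar> \<le> \<bar>a - b\<bar>" for a b :: real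
    by (auto simp: max_def min_def)
  have "\<bar>cutoff N (p y) - cutoff N y\<bar> \<le> \<bar>spine_length (Suc k) / Suc N - spine_length k / Suc N\<bar>"
    using clamp_lipschitz by (simp add: cutoff_def y p_xs spine_index_xs abs_minus_commute)
  also have "\<dots> = 1 / (lam y * Suc N)"
    using lam_pos[rule_format, of y]
    by (simp add: spine_length_def y diff_divide_distrib[symmetric] abs_of_pos)
  finally have "lam y * \<bar>cutoff N (p y) - cutoff N y\<bar> \<le> lam y * (1 / (lam y * Suc N))"
    using lam_pos[rule_format, of y] by (intro mult_left_mono) auto
  then show ?thesis
    using lam_pos[rule_format, of y] by (simp add: abs_mult)
qed (simp add: cutoff_def spine_index_parent)

lemma spine_jacobi_cutoffs: "jacobi_cutoffs p lam cutoff (range xs) (\<lambda>N. 1 / Suc N)"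
proof
  show "finite (children p x)" for x by (rule finite_children)
  show "0 \<le> cutoff N x \<and> cutoff N x \<le> 1" for N x by (simp add: cutoff_def)
  show "finite {x. cutoff N x \<noteq> 0}" for N by (rule cutoff_finite)
  show "eventually (\<lambda>N. cutoff N x = 1) sequentially" for x by (rule cutoff_eventually_one)
  show "inj_on p (range xs)" by (auto simp: inj_on_def p_xs xs_eq_iff)
  show "y \<notin> range xs \<Longrightarrow> cutoff N (p y) = cutoff N y" for y N
    by (simp add: cutoff_def spine_index_parent)
  show "\<bar>lam y * (cutoff N (p y) - cutoff N y)\<bar> \<le> 1 / Suc N" for y N
    by (rule cutoff_slope_bound)
  show "(\<lambda>N. 1 / real (Suc N)) \<longlonglongrightarrow> 0"
    using LIMSEQ_inverse_real_of_nat by (simp add: inverse_eq_divide)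
qed

end

theorem theorem6:
  fixes lvl :: "'v \<Rightarrow> nat" and p :: "'v \<Rightarrow> 'v"
    and lam beta :: "'v \<Rightarrow> real" and xs :: "nat \<Rightarrow> 'v"
  assumes "level_tree lvl p"
    and "\<forall>x. lam x > 0"
    and "\<forall>n. lvl (xs n) = n"
    and "\<forall>n. p (xs n) = xs (Suc n)"
    and "\<not> summable (\<lambda>n. 1 / lam (xs (Suc n)))"
  shows "essentially_selfadjoint (jacobi_graph p lam beta)"
proof -
  interpret spine lvl p lam xs
    using assms by unfold_locales
  interpret jacobi_cutoffs p lam cutoff "range xs" "\<lambda>N. 1 / Suc N"
    by (rule spine_jacobi_cutoffs)
  show ?thesis
  proof (rule essentially_selfadjointI)
    show "jacobi_graph p lam beta \<subseteq> adjoint_graph (jacobi_graph p lam beta)"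
      by (rule jacobi_graph_symmetric[OF finite_children])
    show "densely_defined (jacobi_graph p lam beta)"
      by (rule jacobi_graph_densely_defined[OF finite_children])
    show "adjoint_graph (jacobi_graph p lam beta) \<subseteq> graph_closure (jacobi_graph p lam beta)"
      by (rule adjoint_jacobi_graph_subset_closure)
  qed
qed

end
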